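(* Let $(G,* )$ be a metrizable topological group with no isolated points. Then $G$ has ${\sf S}_c(\mathcal{O}_{\sf nbd},\mathcal{O})$ if and only if $G$ has ${\sf S}_c(\mathcal{O}_{\sf nbd},\Lambda)$.
   Context: For a topological group $(G,* )$ with identity $e$ and a neighborhood $U$ of $e$, $\mathcal{O}(U)=\{x*U:x\in G\}$ and $\mathcal{O}_{\sf nbd}=\{\mathcal{O}(U):U\text{ a neighborhood of }e\}$. $\mathcal{O}$ is the collection of all open covers. An open cover is large if each point is contained in infinitely many elements of the cover; $\Lambda$ denotes the collection of large open covers. A family $\mathcal{B}$ refines $\mathcal{A}$ if every member of $\mathcal{B}$ is contained in some member of $\mathcal{A}$. ${\sf S}_c(\mathcal{A},\mathcal{B})$: for each sequence $(A_n:n<\infty)$ of elements of $\mathcal{A}$ there is a sequence $(B_n:n<\infty)$ such that each $B_n$ is a pairwise disjoint family of open sets refining $A_n$ and $\bigcup_nB_n\in\mathcal{B}$. *)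

theory Defs
  imports "HOL-Analysis.Analysis" "HOL-Algebra.Coset"
begin

definition topological_group :: "('a, 'b) monoid_scheme \<Rightarrow> 'a topology \<Rightarrow> bool" where
  "topological_group G X \<longleftrightarrow>
     group G \<and> topspace X = carrier G \<and>
     continuous_map (prod_topology X X) X (\<lambda>(x, y). x \<otimes>\<^bsub>G\<^esub> y) \<and>
     continuous_map X X (\<lambda>x. inv\<^bsub>G\<^esub> x)"

definition translates_cover :: "('a, 'b) monoid_scheme \<Rightarrow> 'a set \<Rightarrow> 'a set set" where
  "translates_cover G U = (\<lambda>x. x <#\<^bsub>G\<^esub> U) ` carrier G"

definition O_nbd :: "('a, 'b) monoid_scheme \<Rightarrow> 'a topology \<Rightarrow> 'a set set set" where
  "O_nbd G X = {translates_cover G U | U. openin X U \<and> \<one>\<^bsub>G\<^esub> \<in> U}"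

definition open_covers :: "'a topology \<Rightarrow> 'a set set set" where
  "open_covers X = {\<U>. (\<forall>U\<in>\<U>. openin X U) \<and> \<Union>\<U> = topspace X}"

definition large_covers :: "'a topology \<Rightarrow> 'a set set set" where
  "large_covers X = {\<U> \<in> open_covers X. \<forall>x\<in>topspace X. infinite {U \<in> \<U>. x \<in> U}}"

definition S_c :: "'a topology \<Rightarrow> 'a set set set \<Rightarrow> 'a set set set \<Rightarrow> bool" where
  "S_c X \<A> \<B> \<longleftrightarrow>
     (\<forall>A :: nat \<Rightarrow> 'a set set. (\<forall>n. A n \<in> \<A>) \<longrightarrow>
        (\<exists>B :: nat \<Rightarrow> 'a set set.
           (\<forall>n. (\<forall>V\<in>B n. openin X V) \<and> pairwise disjnt (B n) \<and>
                (\<forall>V\<in>B n. \<exists>W\<in>A n. V \<subseteq> W)) \<and>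
           (\<Union>n. B n) \<in> \<B>))"

end

theory Submission
  imports Defs
begin

(* Since every large cover is an open cover, S_c(O_nbd, Lambda) trivially implies S_c(O_nbd, O).
   For the converse, call a set V N-small if x^-1 y \<in> N for all x, y \<in> V.  A metrizable space
   has open neighbourhoods N_0, N_1, ... of the identity shrinking to it (every t <> 1 lies in
   only finitely many N_k), and by continuity of (x, y) |-> x^-1 y there are neighbourhoods W_k of
   the identity that are N_k-small, as are all their left translates.  Splitting the given
   sequence of covers O(U_n) into countably many rows via the pairing of nat and applying
   S_c(O_nbd, O) to row k with U_n shrunk to U_n \<inter> W_k yields open covers C_k consisting of
   N_k-small sets.  Since G has no isolated points, a member V \<ni> x contains a second point y, so
   V is N_k-small for only finitely many k; as x is covered by every C_k, it lies in infinitely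
   many members of the union of the C_k, which is therefore a large cover. *)

definition disjoint_open_refinement :: "'a topology \<Rightarrow> 'a set set \<Rightarrow> 'a set set \<Rightarrow> bool" where
  "disjoint_open_refinement X \<B> \<A> \<longleftrightarrow>
     (\<forall>V\<in>\<B>. openin X V) \<and> pairwise disjnt \<B> \<and> (\<forall>V\<in>\<B>. \<exists>W\<in>\<A>. V \<subseteq> W)"

lemma S_c_iff:
  "S_c X \<A> \<B> \<longleftrightarrow>
     (\<forall>A :: nat \<Rightarrow> 'a set set. (\<forall>n. A n \<in> \<A>) \<longrightarrow>
        (\<exists>B :: nat \<Rightarrow> 'a set set. (\<forall>n. disjoint_open_refinement X (B n) (A n)) \<and> (\<Union>n. B n) \<in> \<B>))"
  unfolding S_c_def disjoint_open_refinement_def ..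

lemma S_c_mono:
  assumes "S_c X \<A> \<B>" and "\<B> \<subseteq> \<B>'"
  shows "S_c X \<A> \<B>'"
  unfolding S_c_iff
proof (intro allI impI)
  fix A :: "nat \<Rightarrow> 'a set set" assume "\<forall>n. A n \<in> \<A>"
  then obtain B where "(\<forall>n. disjoint_open_refinement X (B n) (A n)) \<and> (\<Union>n. B n) \<in> \<B>"
    using assms(1) unfolding S_c_iff by blast
  then show "\<exists>B. (\<forall>n. disjoint_open_refinement X (B n) (A n)) \<and> (\<Union>n. B n) \<in> \<B>'"
    using assms(2) by blast
qed

lemma disjoint_open_refinement_coarsen:
  assumes "disjoint_open_refinement X \<B> \<A>'" and "\<forall>W'\<in>\<A>'. \<exists>W\<in>\<A>. W' \<subseteq> W"
  shows "disjoint_open_refinement X \<B> \<A>"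
  using assms unfolding disjoint_open_refinement_def by (meson order_trans)

lemma S_c_rows:
  fixes A :: "'i \<Rightarrow> nat \<Rightarrow> 'a set set"
  assumes "S_c X \<A> \<B>" and "\<And>k m. A k m \<in> \<A>"
  shows "\<exists>B. (\<forall>k m. disjoint_open_refinement X (B k m) (A k m)) \<and> (\<forall>k. (\<Union>m. B k m) \<in> \<B>)"
proof -
  have "\<forall>k. \<exists>Bk. (\<forall>m. disjoint_open_refinement X (Bk m) (A k m)) \<and> (\<Union>m. Bk m) \<in> \<B>"
  proof
    fix k
    show "\<exists>Bk. (\<forall>m. disjoint_open_refinement X (Bk m) (A k m)) \<and> (\<Union>m. Bk m) \<in> \<B>"
      using assms(1)[unfolded S_c_iff, rule_format, of "A k"] assms(2) by blast
  qed
  then show ?thesis by metis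
qed

lemma (in group) inv_mult_translate:
  assumes "a \<in> carrier G" "w1 \<in> carrier G" "w2 \<in> carrier G"
  shows "inv (a \<otimes> w1) \<otimes> (a \<otimes> w2) = inv w1 \<otimes> w2"
  using assms by (simp add: inv_mult_group m_assoc flip: m_assoc[of "inv a"])

lemma (in group) inv_mult_eq_one_imp_eq:
  assumes "x \<in> carrier G" "y \<in> carrier G" "inv x \<otimes> y = \<one>"
  shows "y = x"
  using assms by (metis inv_equality inv_inv inv_closed)

definition small_in :: "('a, 'b) monoid_scheme \<Rightarrow> 'a set \<Rightarrow> 'a set \<Rightarrow> bool" where
  "small_in G N V \<longleftrightarrow> (\<forall>y\<in>V. \<forall>z\<in>V. inv\<^bsub>G\<^esub> y \<otimes>\<^bsub>G\<^esub> z \<in> N)"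

lemma (in group) small_in_translate:
  assumes "small_in G N W" "W \<subseteq> carrier G" "T \<in> translates_cover G W"
  shows "small_in G N T"
  unfolding small_in_def
proof (intro ballI)
  fix y z assume "y \<in> T" "z \<in> T"
  obtain a where a: "a \<in> carrier G" "T = a <# W"
    using assms(3) unfolding translates_cover_def by blast
  obtain w1 w2 where "w1 \<in> W" "w2 \<in> W" "y = a \<otimes> w1" "z = a \<otimes> w2"
    using \<open>y \<in> T\<close> \<open>z \<in> T\<close> a unfolding l_coset_def by blast
  moreover have "inv y \<otimes> z = inv w1 \<otimes> w2"
    using calculation inv_mult_translate a(1) assms(2) by blast
  ultimately show "inv y \<otimes> z \<in> N"
    using assms(1) unfolding small_in_def by simp
qed

lemma translates_cover_mono:
  assumes "U' \<subseteq> U" "T' \<in> translates_cover G U'"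
  shows "\<exists>T\<in>translates_cover G U. T' \<subseteq> T"
  using assms unfolding translates_cover_def l_coset_def by blast

text \<open>Continuity of \<open>(x, y) \<mapsto> x\<^sup>-\<^sup>1y\<close> at \<open>(1, 1)\<close> gives, for each open neighbourhood \<open>N\<close> of the
  identity, an open neighbourhood \<open>W\<close> of the identity that is \<open>N\<close>-small.\<close>
lemma topological_group_small_nbhd:
  assumes tg: "topological_group G X" and N: "openin X N" "\<one>\<^bsub>G\<^esub> \<in> N"
  shows "\<exists>W. openin X W \<and> \<one>\<^bsub>G\<^esub> \<in> W \<and> small_in G N W"
proof -
  have grp: "group G" and top: "topspace X = carrier G"
    and mult: "continuous_map (prod_topology X X) X (\<lambda>(x, y). x \<otimes>\<^bsub>G\<^esub> y)"
    and inv: "continuous_map X X (\<lambda>x. inv\<^bsub>G\<^esub> x)"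
    using tg by (auto simp: topological_group_def)
  define q where "q = (\<lambda>z. inv\<^bsub>G\<^esub> (fst z) \<otimes>\<^bsub>G\<^esub> snd z)"
  have "continuous_map (prod_topology X X) (prod_topology X X) (\<lambda>z. (inv\<^bsub>G\<^esub> (fst z), snd z))"
    by (intro continuous_map_pairedI continuous_map_compose[OF continuous_map_fst inv, unfolded o_def]
        continuous_map_snd)
  from continuous_map_compose[OF this mult]
  have "continuous_map (prod_topology X X) X q"
    by (simp add: o_def case_prod_beta q_def)
  then have "openin (prod_topology X X) {z \<in> topspace (prod_topology X X). q z \<in> N}"
    using N(1) by (rule openin_continuous_map_preimage)
  moreover have "(\<one>\<^bsub>G\<^esub>, \<one>\<^bsub>G\<^esub>) \<in> {z \<in> topspace (prod_topology X X). q z \<in> N}"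
    using grp N(2) top by (simp add: q_def group.is_monoid monoid.inv_one)
  ultimately obtain U V where UV: "openin X U" "openin X V" "\<one>\<^bsub>G\<^esub> \<in> U" "\<one>\<^bsub>G\<^esub> \<in> V"
    "U \<times> V \<subseteq> {z \<in> topspace (prod_topology X X). q z \<in> N}"
    unfolding openin_prod_topology_alt by meson
  show ?thesis
    unfolding small_in_def
  proof (intro exI conjI ballI)
    show "openin X (U \<inter> V)" "\<one>\<^bsub>G\<^esub> \<in> U \<inter> V" using UV by auto
    fix w1 w2 assume "w1 \<in> U \<inter> V" "w2 \<in> U \<inter> V"
    then show "inv\<^bsub>G\<^esub> w1 \<otimes>\<^bsub>G\<^esub> w2 \<in> N" using UV(5) by (force simp: q_def)
  qed
qed

definition shrinking_nbhds :: "'a topology \<Rightarrow> 'a \<Rightarrow> (nat \<Rightarrow> 'a set) \<Rightarrow> bool" where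
  "shrinking_nbhds X x N \<longleftrightarrow>
     (\<forall>k. openin X (N k) \<and> x \<in> N k) \<and> (\<forall>y\<in>topspace X. y \<noteq> x \<longrightarrow> finite {k. y \<in> N k})"

text \<open>In a metric space the balls of radius \<open>1/(k+1)\<close> shrink to their centre.\<close>
lemma metrizable_shrinking_nbhds:
  assumes "metrizable_space X" "x \<in> topspace X"
  shows "\<exists>N. shrinking_nbhds X x N"
proof -
  obtain M d where ms: "Metric_space M d" and X: "X = Metric_space.mtopology M d"
    using assms(1) unfolding metrizable_space_def by blast
  interpret Metric_space M d by (fact ms)
  have xM: "x \<in> M" using assms(2) X by simp
  define N where "N k = mball x (1 / real (Suc k))" for k
  have "finite {k. y \<in> N k}" if "y \<in> M" "y \<noteq> x" for y
  proof -
    have "0 < d x y" using that xM by simp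
    then obtain K where K: "inverse (real (Suc K)) < d x y"
      using reals_Archimedean by blast
    have "{k. y \<in> N k} \<subseteq> {..<K}"
    proof
      fix k assume "k \<in> {k. y \<in> N k}"
      then have "d x y < 1 / real (Suc k)" by (simp add: N_def)
      show "k \<in> {..<K}"
      proof (rule ccontr)
        assume "k \<notin> {..<K}"
        then have "1 / real (Suc k) \<le> inverse (real (Suc K))"
          by (simp add: divide_inverse frac_le)
        with K \<open>d x y < 1 / real (Suc k)\<close> show False by linarith
      qed
    qed
    then show ?thesis using finite_subset by blast
  qed
  moreover have "openin X (N k) \<and> x \<in> N k" for k
    using xM by (simp add: N_def X)
  moreover have "topspace X = M" using X by simp
  ultimately have "shrinking_nbhds X x N" unfolding shrinking_nbhds_def by blast
  then show ?thesis by blast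
qed

lemma infinitely_many_from_levels:
  fixes C :: "nat \<Rightarrow> 'a set set"
  assumes cov: "\<And>k. x \<in> \<Union>(C k)" and fin: "\<And>V. x \<in> V \<Longrightarrow> finite {k. V \<in> C k}"
  shows "infinite {V \<in> (\<Union>k. C k). x \<in> V}" (is "infinite ?S")
proof
  assume S: "finite ?S"
  have "UNIV \<subseteq> (\<Union>V\<in>?S. {k. V \<in> C k})"
  proof
    fix k :: nat
    obtain V where "V \<in> C k" "x \<in> V" using cov[of k] by blast
    then show "k \<in> (\<Union>V\<in>?S. {k. V \<in> C k})" by blast
  qed
  moreover have "finite (\<Union>V\<in>?S. {k. V \<in> C k})"
    using S fin by (intro finite_UN_I) auto
  ultimately have "finite (UNIV :: nat set)" by (rule finite_subset)
  then show False by simp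
qed

text \<open>For this,
  each \<open>O(U\<^sub>n)\<close> is replaced by \<open>O(U\<^sub>n \<inter> W\<^sub>k)\<close> with \<open>W\<^sub>k\<^sup>-\<^sup>1W\<^sub>k \<subseteq> N k\<close>.\<close>
lemma S_c_open_small_rows:
  fixes A :: "nat \<Rightarrow> 'a set set" and N :: "nat \<Rightarrow> 'a set"
  assumes tg: "topological_group G X" and N: "\<And>k. openin X (N k) \<and> \<one>\<^bsub>G\<^esub> \<in> N k"
    and open_sel: "S_c X (O_nbd G X) (open_covers X)" and A: "\<And>n. A n \<in> O_nbd G X"
  shows "\<exists>B. (\<forall>k m. disjoint_open_refinement X (B k m) (A (prod_encode (k, m)))) \<and>
             (\<forall>k. (\<Union>m. B k m) \<in> open_covers X) \<and> (\<forall>k m. \<forall>V\<in>B k m. small_in G (N k) V)"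
proof -
  have grp: "group G" and top: "topspace X = carrier G"
    using tg by (auto simp: topological_group_def)
  have "\<forall>n. \<exists>U. openin X U \<and> \<one>\<^bsub>G\<^esub> \<in> U \<and> A n = translates_cover G U"
    using A unfolding O_nbd_def by blast
  then obtain U where U: "\<And>n. openin X (U n) \<and> \<one>\<^bsub>G\<^esub> \<in> U n \<and> A n = translates_cover G (U n)"
    by (auto dest!: choice)
  have "\<forall>k. \<exists>W. openin X W \<and> \<one>\<^bsub>G\<^esub> \<in> W \<and> small_in G (N k) W"
    using topological_group_small_nbhd[OF tg] N by blast
  then obtain W where W: "\<And>k. openin X (W k) \<and> \<one>\<^bsub>G\<^esub> \<in> W k \<and> small_in G (N k) (W k)"
    by (auto dest!: choice)
  define U' where "U' k m = U (prod_encode (k, m)) \<inter> W k" for k m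
  have U'_nbhd: "openin X (U' k m) \<and> \<one>\<^bsub>G\<^esub> \<in> U' k m" for k m
    using U W unfolding U'_def by auto
  then have "translates_cover G (U' k m) \<in> O_nbd G X" for k m
    unfolding O_nbd_def by blast
  then obtain B where B: "\<And>k m. disjoint_open_refinement X (B k m) (translates_cover G (U' k m))"
    and B_cover: "\<And>k. (\<Union>m. B k m) \<in> open_covers X"
    using S_c_rows[OF open_sel, of "\<lambda>k m. translates_cover G (U' k m)"] by blast
  have "disjoint_open_refinement X (B k m) (A (prod_encode (k, m)))" for k m
  proof (rule disjoint_open_refinement_coarsen[OF B], intro ballI)
    fix T' assume T': "T' \<in> translates_cover G (U' k m)"
    have "U' k m \<subseteq> U (prod_encode (k, m))" unfolding U'_def by blast
    then show "\<exists>T\<in>A (prod_encode (k, m)). T' \<subseteq> T"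
      using translates_cover_mono[OF _ T'] U[of "prod_encode (k, m)"] by simp
  qed
  moreover have "small_in G (N k) V" if "V \<in> B k m" for V k m
  proof -
    obtain T where T: "T \<in> translates_cover G (U' k m)" "V \<subseteq> T"
      using B \<open>V \<in> B k m\<close> unfolding disjoint_open_refinement_def by blast
    have "small_in G (N k) (U' k m)"
      using W[of k] unfolding U'_def small_in_def by blast
    moreover have "U' k m \<subseteq> carrier G"
      using U'_nbhd[of k m] openin_subset top by blast
    ultimately
    have "small_in G (N k) T" using group.small_in_translate[OF grp] T(1) by blast
    then show ?thesis using T(2) unfolding small_in_def by blast
  qed
  ultimately show ?thesis using B_cover by blast
qed

text \<open>If the neighbourhoods \<open>N k\<close> shrink to the identity and there are no isolated points, then
  a set \<open>V\<close> with two points \<open>x \<noteq> y\<close> is \<open>N k\<close>-small for only finitely many \<open>k\<close>.\<close>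
lemma large_cover_of_small_levels:
  fixes C :: "nat \<Rightarrow> 'a set set"
  assumes tg: "topological_group G X" and N: "shrinking_nbhds X \<one>\<^bsub>G\<^esub> N"
    and no_isolated: "\<forall>x\<in>topspace X. \<not> openin X {x}"
    and C: "\<And>k. C k \<in> open_covers X" and small: "\<And>k V. V \<in> C k \<Longrightarrow> small_in G (N k) V"
  shows "(\<Union>k. C k) \<in> large_covers X"
proof -
  have grp: "group G" and top: "topspace X = carrier G"
    using tg by (auto simp: topological_group_def)
  have C_open: "openin X V" if "V \<in> C k" for V k
    using C[of k] that unfolding open_covers_def by blast
  have C_covers: "\<Union>(C k) = topspace X" for k
    using C[of k] unfolding open_covers_def by blast
  have few_levels: "finite {k. V \<in> C k}" if "x \<in> V" for V x
  proof (cases "\<exists>k. V \<in> C k")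
    case True
    then have V: "openin X V" using C_open by blast
    text \<open>Since \<open>x\<close> is not isolated, \<open>V\<close> contains a second point \<open>y\<close>.\<close>
    have "V \<noteq> {x}" using no_isolated V openin_subset \<open>x \<in> V\<close> by blast
    then obtain y where y: "y \<in> V" "y \<noteq> x" using \<open>x \<in> V\<close> by blast
    have xy: "x \<in> carrier G" "y \<in> carrier G" using V y \<open>x \<in> V\<close> openin_subset top by blast+
    define t where "t = inv\<^bsub>G\<^esub> x \<otimes>\<^bsub>G\<^esub> y"
    have "t \<in> topspace X"
      unfolding t_def top using xy
      by (simp add: group.inv_closed[OF grp] monoid.m_closed[OF group.is_monoid[OF grp]])
    moreover have "t \<noteq> \<one>\<^bsub>G\<^esub>"
      using group.inv_mult_eq_one_imp_eq[OF grp xy] y(2) unfolding t_def by blast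
    ultimately have "finite {k. t \<in> N k}" using N unfolding shrinking_nbhds_def by blast
    moreover have "{k. V \<in> C k} \<subseteq> {k. t \<in> N k}"
      using small \<open>x \<in> V\<close> y(1) unfolding t_def small_in_def by blast
    ultimately show ?thesis by (rule finite_subset[rotated])
  qed simp
  have "\<Union>(\<Union>k. C k) = (\<Union>k. \<Union>(C k))" by blast
  also have "\<dots> = topspace X" by (simp add: C_covers)
  finally have "(\<Union>k. C k) \<in> open_covers X"
    unfolding open_covers_def using C_open by blast
  moreover have "infinite {V \<in> (\<Union>k. C k). x \<in> V}" if "x \<in> topspace X" for x
    by (rule infinitely_many_from_levels) (use C_covers that few_levels in auto)
  ultimately show ?thesis unfolding large_covers_def by blast
qed

lemma S_c_open_imp_large:
  assumes tg: "topological_group G X" and N: "shrinking_nbhds X \<one>\<^bsub>G\<^esub> N"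
    and no_isolated: "\<forall>x\<in>topspace X. \<not> openin X {x}"
    and open_sel: "S_c X (O_nbd G X) (open_covers X)"
  shows "S_c X (O_nbd G X) (large_covers X)"
  unfolding S_c_iff
proof (intro allI impI)
  fix A :: "nat \<Rightarrow> 'a set set" assume "\<forall>n. A n \<in> O_nbd G X"
  then obtain B where B: "\<And>k m. disjoint_open_refinement X (B k m) (A (prod_encode (k, m)))"
    and B_cover: "\<And>k. (\<Union>m. B k m) \<in> open_covers X"
    and B_small: "\<And>k m. \<forall>V\<in>B k m. small_in G (N k) V"
    using S_c_open_small_rows[OF tg _ open_sel, where A=A and N=N] N unfolding shrinking_nbhds_def by blast
  define B' where "B' n = case_prod B (prod_decode n)" for n
  have refines: "disjoint_open_refinement X (B' n) (A n)" for n
    using B[of "fst (prod_decode n)" "snd (prod_decode n)"] by (simp add: B'_def case_prod_beta)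
  have "(\<Union>n. B' n) = \<Union>(case_prod B ` range prod_decode)"
    unfolding B'_def by (simp add: image_image)
  also have "\<dots> = (\<Union>k. \<Union>m. B k m)"
    unfolding surj_prod_decode by auto
  also have "\<dots> \<in> large_covers X"
    by (rule large_cover_of_small_levels[OF tg N no_isolated B_cover]) (use B_small in blast)
  finally show "\<exists>B. (\<forall>n. disjoint_open_refinement X (B n) (A n)) \<and> (\<Union>n. B n) \<in> large_covers X"
    using refines by blast
qed

theorem theorem3p6:
  fixes G :: "('a, 'b) monoid_scheme" and X :: "'a topology"
  assumes "topological_group G X"
    and "metrizable_space X"
    and "\<forall>x\<in>topspace X. \<not> openin X {x}"
  shows "S_c X (O_nbd G X) (open_covers X) \<longleftrightarrow> S_c X (O_nbd G X) (large_covers X)"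
proof
  assume "S_c X (O_nbd G X) (open_covers X)"
  moreover have "\<one>\<^bsub>G\<^esub> \<in> topspace X"
    using assms(1) by (simp add: topological_group_def group.is_monoid)
  then obtain N where "shrinking_nbhds X \<one>\<^bsub>G\<^esub> N"
    using metrizable_shrinking_nbhds[OF assms(2)] by blast
  ultimately show "S_c X (O_nbd G X) (large_covers X)"
    using S_c_open_imp_large assms(1,3) by blast
next
  assume "S_c X (O_nbd G X) (large_covers X)"
  moreover have "large_covers X \<subseteq> open_covers X"
    unfolding large_covers_def by blast
  ultimately show "S_c X (O_nbd G X) (open_covers X)"
    by (rule S_c_mono)
qed

end
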